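(* Let $0<L,W<\infty$, $\tau=iW/L$, $N\in\mathbb{N}$, and $R_N\in\{A_{N-1},B_N,B_N^\vee,C_N,C_N^\vee,BC_N,D_N\}$. Define for $\mathbf{z}=(z_1,\dots,z_N)\in\mathbb{C}^N$, $z_j=x_j+iy_j$, $$Q^{A_{N-1}}(\mathbf{z})=\exp\Big(-\frac{2\pi\mathcal{N}}{LW}\sum_{j=1}^Ny_j^2\Big)\Big|\vartheta_{s(N)}\Big(\sum_{k=1}^N\frac{z_k}{L};\tau\Big)\Big|^2\big|W^{A_{N-1}}(\mathbf{z}/L;\tau)\big|^2,$$ and for the other six types $Q^{R_N}(\mathbf{z})=\exp(-\frac{2\pi\mathcal{N}}{LW}\sum_j y_j^2)|W^{R_N}(\mathbf{z}/L;\tau)|^2$. Then $Q^{R_N}$ is doubly periodic with periods $(L,iW)$ in each variable: for every $m=1,\dots,N$, $Q^{R_N}(\sigma_m(L)\mathbf{z})=Q^{R_N}(\mathbf{z})$ and $Q^{R_N}(\sigma_m(iW)\mathbf{z})=Q^{R_N}(\mathbf{z})$.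
   Context: Jacobi theta functions: for $v\in\mathbb{C}$, $\Im\tau>0$, $q_0=e^{\pi i\tau}$: $\vartheta_0(v;\tau)=\sum_{n\in\mathbb{Z}}(-1)^nq_0^{n^2}e^{2\pi inv}$, $\vartheta_1(v;\tau)=i\sum_{n}(-1)^nq_0^{(n-1/2)^2}e^{(2n-1)\pi iv}$, $\vartheta_2(v;\tau)=\sum_nq_0^{(n-1/2)^2}e^{(2n-1)\pi iv}$, $\vartheta_3(v;\tau)=\sum_nq_0^{n^2}e^{2\pi inv}$. $\mathcal{N}=\mathcal{N}^{R_N}$ is: $N$ for $A_{N-1}$; $2N-1$ for $B_N$; $2N$ for $B_N^\vee,C_N^\vee$; $2(N+1)$ for $C_N$; $2N+1$ for $BC_N$; $2(N-1)$ for $D_N$. $s(N)=0$ for $N$ even, $3$ for $N$ odd. Macdonald denominators, with $P(\boldsymbol\xi)=\prod_{1\le j<k\le N}\vartheta_1(\xi_k-\xi_j;\tau)\vartheta_1(\xi_k+\xi_j;\tau)$: $W^{A_{N-1}}(\boldsymbol\xi;\tau)=\prod_{j<k}\vartheta_1(\xi_k-\xi_j;\tau)$; $W^{B_N}=\prod_\ell\vartheta_1(\xi_\ell;\tau)P$; $W^{B_N^\vee}=\prod_\ell\vartheta_1(2\xi_\ell;2\tau)P$; $W^{C_N}=\prod_\ell\vartheta_1(2\xi_\ell;\tau)P$; $W^{C_N^\vee}=\prod_\ell\vartheta_1(\xi_\ell;\tau/2)P$; $W^{BC_N}=\prod_\ell\vartheta_1(\xi_\ell;\tau)\vartheta_0(2\xi_\ell;2\tau)P$;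 $W^{D_N}=P$. $\mathbf{z}/L=(z_1/L,\dots,z_N/L)$; $\sigma_m(w)$ replaces $z_m$ by $z_m+w$. *)

theory Defs
  imports "HOL-Analysis.Analysis"
begin

text \<open>Jacobi theta functions, as (absolutely convergent) sums over the integers.
  Here q0^(a) is written exp(pi i tau a).\<close>

definition theta0 :: "complex \<Rightarrow> complex \<Rightarrow> complex" where
  "theta0 v tau = (\<Sum>\<^sub>\<infinity>n::int. (-1) powi n *
      exp (pi * \<i> * tau * (of_int n)^2 + 2 * pi * \<i> * of_int n * v))"

definition theta1 :: "complex \<Rightarrow> complex \<Rightarrow> complex" where
  "theta1 v tau = \<i> * (\<Sum>\<^sub>\<infinity>n::int. (-1) powi n *
      exp (pi * \<i> * tau * (of_int n - 1/2)^2 + (2 * of_int n - 1) * pi * \<i> * v))"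

definition theta2 :: "complex \<Rightarrow> complex \<Rightarrow> complex" where
  "theta2 v tau = (\<Sum>\<^sub>\<infinity>n::int.
      exp (pi * \<i> * tau * (of_int n - 1/2)^2 + (2 * of_int n - 1) * pi * \<i> * v))"

definition theta3 :: "complex \<Rightarrow> complex \<Rightarrow> complex" where
  "theta3 v tau = (\<Sum>\<^sub>\<infinity>n::int.
      exp (pi * \<i> * tau * (of_int n)^2 + 2 * pi * \<i> * of_int n * v))"

definition theta_s :: "nat \<Rightarrow> complex \<Rightarrow> complex \<Rightarrow> complex" where
  "theta_s N = (if even N then theta0 else theta3)"

text \<open>The seven root-system types: A_{N-1}, B_N, B_N^vee, C_N, C_N^vee, BC_N, D_N.\<close>
datatype rtype = TA | TB | TBv | TC | TCv | TBC | TD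

definition calN :: "rtype \<Rightarrow> nat \<Rightarrow> nat" where
  "calN R N = (case R of TA \<Rightarrow> N | TB \<Rightarrow> 2*N - 1 | TBv \<Rightarrow> 2*N | TCv \<Rightarrow> 2*N
      | TC \<Rightarrow> 2*(N+1) | TBC \<Rightarrow> 2*N + 1 | TD \<Rightarrow> 2*(N-1))"

text \<open>Points of C^N are functions nat => complex, coordinates indexed by 1..N.\<close>
definition Pfac :: "nat \<Rightarrow> (nat \<Rightarrow> complex) \<Rightarrow> complex \<Rightarrow> complex" where
  "Pfac N xi tau = (\<Prod>j\<in>{1..N}. \<Prod>k\<in>{j<..N}.
      theta1 (xi k - xi j) tau * theta1 (xi k + xi j) tau)"

definition macW :: "rtype \<Rightarrow> nat \<Rightarrow> (nat \<Rightarrow> complex) \<Rightarrow> complex \<Rightarrow> complex" where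
  "macW R N xi tau = (case R of
      TA \<Rightarrow> (\<Prod>j\<in>{1..N}. \<Prod>k\<in>{j<..N}. theta1 (xi k - xi j) tau)
    | TB \<Rightarrow> (\<Prod>l\<in>{1..N}. theta1 (xi l) tau) * Pfac N xi tau
    | TBv \<Rightarrow> (\<Prod>l\<in>{1..N}. theta1 (2 * xi l) (2 * tau)) * Pfac N xi tau
    | TC \<Rightarrow> (\<Prod>l\<in>{1..N}. theta1 (2 * xi l) tau) * Pfac N xi tau
    | TCv \<Rightarrow> (\<Prod>l\<in>{1..N}. theta1 (xi l) (tau / 2)) * Pfac N xi tau
    | TBC \<Rightarrow> (\<Prod>l\<in>{1..N}. theta1 (xi l) tau * theta0 (2 * xi l) (2 * tau)) * Pfac N xi tau
    | TD \<Rightarrow> Pfac N xi tau)"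

definition Qfun :: "rtype \<Rightarrow> nat \<Rightarrow> real \<Rightarrow> real \<Rightarrow> (nat \<Rightarrow> complex) \<Rightarrow> real" where
  "Qfun R N L W z =
    (let tau = \<i> * of_real W / of_real L;
         zL = (\<lambda>j. z j / of_real L);
         g = exp (- 2 * pi * real (calN R N) / (L * W) * (\<Sum>j\<in>{1..N}. (Im (z j))^2))
     in if R = TA then
          g * (cmod (theta_s N (\<Sum>k\<in>{1..N}. z k / of_real L) tau))^2 * (cmod (macW TA N zL tau))^2
        else g * (cmod (macW R N zL tau))^2)"

definition sigma :: "nat \<Rightarrow> complex \<Rightarrow> (nat \<Rightarrow> complex) \<Rightarrow> (nat \<Rightarrow> complex)" where
  "sigma m w z = z(m := z m + w)"

end

(* Every theta function \<theta> occurring here satisfies |\<theta>(v + 1)| = |\<theta>(v)| and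
   |\<theta>(v + \<tau>)| = exp(\<pi> Im \<tau> + 2\<pi> Im v) |\<theta>(v)|, so the Gaussian-normalised weight
   exp(-2\<pi> (Im v)^2 / Im \<tau>) |\<theta>(v; \<tau>)|^2 is periodic with respect to the lattice Z + \<tau> Z.
   Q is a product of such weights, evaluated at x_j = z_j/L, at x_k \<plusminus> x_j, at 2 x_l or at
   the sum of the x_j: the Gaussian prefactor of Q splits accordingly because of the identities
     \<Sum>_{j<k} (y_k - y_j)^2 + (\<Sum>_j y_j)^2 = N \<Sum>_j y_j^2,
     \<Sum>_{j<k} ((y_k - y_j)^2 + (y_k + y_j)^2) = 2 (N - 1) \<Sum>_j y_j^2.
   Shifting z_m by L or by iW shifts each of these arguments by a lattice vector. *)

theory Submission
  imports Defs "HOL-Library.Periodic_Fun"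
begin

lemma sum_pairs_Suc:
  "(\<Sum>j\<in>{1..Suc N}. \<Sum>k\<in>{j<..Suc N}. F j k) =
   (\<Sum>j\<in>{1..N}. \<Sum>k\<in>{j<..N}. F j k) + (\<Sum>j\<in>{1..N}. F j (Suc N) :: 'a :: comm_monoid_add)"
proof -
  have "{j<..Suc N} = insert (Suc N) {j<..N}" if "j \<le> N" for j
    using that by auto
  then have "(\<Sum>j\<in>{1..N}. \<Sum>k\<in>{j<..Suc N}. F j k) = (\<Sum>j\<in>{1..N}. (\<Sum>k\<in>{j<..N}. F j k) + F j (Suc N))"
    by (intro sum.cong) (auto simp: add.commute)
  then show ?thesis
    by (simp add: sum.distrib)
qed

lemma sum_pairs_sq_diff_add_sq_sum:
  fixes y :: "nat \<Rightarrow> 'a :: comm_ring_1"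
  shows "(\<Sum>j\<in>{1..N}. \<Sum>k\<in>{j<..N}. (y k - y j)^2) + (\<Sum>j\<in>{1..N}. y j)^2
    = of_nat N * (\<Sum>j\<in>{1..N}. (y j)^2)"
proof (induction N)
  case 0
  then show ?case by simp
next
  case (Suc N)
  let ?y = "y (Suc N)" and ?S = "\<Sum>j\<in>{1..N}. y j"
  have "(\<Sum>j\<in>{1..N}. (?y - y j)^2) = of_nat N * ?y^2 - 2 * ?y * ?S + (\<Sum>j\<in>{1..N}. (y j)^2)"
    by (simp add: power2_diff sum.distrib sum_subtractf sum_distrib_left mult_ac)
  then have "(\<Sum>j\<in>{1..Suc N}. \<Sum>k\<in>{j<..Suc N}. (y k - y j)^2) + (\<Sum>j\<in>{1..Suc N}. y j)^2
      = ((\<Sum>j\<in>{1..N}. \<Sum>k\<in>{j<..N}. (y k - y j)^2) + ?S^2) + of_nat N * ?y^2 + (\<Sum>j\<in>{1..N}. (y j)^2) + ?y^2"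
    unfolding sum_pairs_Suc by (simp add: power2_eq_square algebra_simps)
  then show ?case
    unfolding Suc.IH by (simp add: algebra_simps)
qed

lemma sum_pairs_sq_diff_add_sq_add:
  fixes y :: "nat \<Rightarrow> 'a :: comm_ring_1"
  shows "(\<Sum>j\<in>{1..N}. \<Sum>k\<in>{j<..N}. (y k - y j)^2 + (y k + y j)^2)
    = 2 * (of_nat N - 1) * (\<Sum>j\<in>{1..N}. (y j)^2)"
proof (induction N)
  case 0
  then show ?case by simp
next
  case (Suc N)
  have "(y (Suc N) - y j)^2 + (y (Suc N) + y j)^2 = 2 * (y j)^2 + 2 * (y (Suc N))^2" for j
    by (simp add: power2_eq_square algebra_simps)
  then have "(\<Sum>j\<in>{1..Suc N}. \<Sum>k\<in>{j<..Suc N}. (y k - y j)^2 + (y k + y j)^2)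
      = 2 * (of_nat N - 1) * (\<Sum>j\<in>{1..N}. (y j)^2) + 2 * (\<Sum>j\<in>{1..N}. (y j)^2) + 2 * of_nat N * (y (Suc N))^2"
    unfolding sum_pairs_Suc Suc.IH by (simp add: sum.distrib sum_distrib_left)
  then show ?case
    by (simp add: algebra_simps)
qed

lemma power2_norm_prod: "(norm (prod f A))^2 = (\<Prod>x\<in>A. (norm (f x))^2)"
  for f :: "'a \<Rightarrow> 'b :: {real_normed_field}"
  by (simp add: prod_norm[symmetric] prod_power_distrib)

lemma prod_exp_mult: "(\<Prod>x\<in>A. exp (f x) * g x) = exp (\<Sum>x\<in>A. f x) * (\<Prod>x\<in>A. g x :: real)"
  by (cases "finite A") (simp_all add: prod.distrib exp_sum)

definition theta_char :: "real \<Rightarrow> complex \<Rightarrow> complex \<Rightarrow> complex \<Rightarrow> complex" where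
  "theta_char a \<epsilon> v t = (\<Sum>\<^sub>\<infinity>n::int. \<epsilon> powi n *
      exp (pi * \<i> * t * (of_int n + of_real a)^2 + 2 * pi * \<i> * (of_int n + of_real a) * v))"

lemma theta0_eq_theta_char: "theta0 v t = theta_char 0 (-1) v t"
  unfolding theta0_def theta_char_def by (simp add: mult_ac)

lemma theta3_eq_theta_char: "theta3 v t = theta_char 0 1 v t"
  unfolding theta3_def theta_char_def by (simp add: mult_ac)

lemma theta1_eq_theta_char: "theta1 v t = \<i> * theta_char (-1/2) (-1) v t"
  unfolding theta1_def theta_char_def by (simp add: algebra_simps diff_divide_distrib)

lemma theta_char_plus_1:
  "theta_char a \<epsilon> (v + 1) t = exp (2 * pi * \<i> * of_real a) * theta_char a \<epsilon> v t"
proof -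
  define c where "c = exp (2 * pi * \<i> * of_real a)"
  define f where "f w n = \<epsilon> powi n *
      exp (pi * \<i> * t * (of_int n + of_real a)^2 + 2 * pi * \<i> * (of_int n + of_real a) * w)"
    for w and n :: int
  have "f (v + 1) n = c * f v n" for n
  proof -
    have "exp (pi * \<i> * t * (of_int n + of_real a)^2 + 2 * pi * \<i> * (of_int n + of_real a) * (v + 1))
      = exp ((2 * pi * \<i> * of_real a +
          (pi * \<i> * t * (of_int n + of_real a)^2 + 2 * pi * \<i> * (of_int n + of_real a) * v)) +
          2 * of_int n * pi * \<i>)"
      by (rule arg_cong[where f = exp]) (simp add: algebra_simps)
    moreover have "exp (2 * of_int n * pi * \<i>) = 1"
      by (rule exp_integer_2pi) simp
    ultimately show ?thesis
      unfolding c_def f_def by (simp only: exp_add mult_1_right mult.left_commute)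
  qed
  then have "theta_char a \<epsilon> (v + 1) t = (\<Sum>\<^sub>\<infinity>n. c * f v n)"
    unfolding theta_char_def f_def[symmetric] by simp
  also have "\<dots> = c * theta_char a \<epsilon> v t"
    unfolding theta_char_def f_def by (rule infsum_cmult_right')
  finally show ?thesis
    unfolding c_def .
qed

lemma theta_char_plus_tau:
  assumes "\<epsilon> \<noteq> 0"
  shows "theta_char a \<epsilon> (v + t) t = exp (- pi * \<i> * t - 2 * pi * \<i> * v) / \<epsilon> * theta_char a \<epsilon> v t"
proof -
  define c where "c = exp (- pi * \<i> * t - 2 * pi * \<i> * v) / \<epsilon>"
  define f where "f w n = \<epsilon> powi n *
      exp (pi * \<i> * t * (of_int n + of_real a)^2 + 2 * pi * \<i> * (of_int n + of_real a) * w)"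
    for w and n :: int
  have "f (v + t) n = c * f v (n + 1)" for n
  proof -
    have "exp (pi * \<i> * t * (of_int n + of_real a)^2 + 2 * pi * \<i> * (of_int n + of_real a) * (v + t))
        = exp ((- pi * \<i> * t - 2 * pi * \<i> * v) +
          (pi * \<i> * t * (of_int (n + 1) + of_real a)^2 + 2 * pi * \<i> * (of_int (n + 1) + of_real a) * v))"
      by (rule arg_cong[where f = exp]) (simp add: algebra_simps power2_eq_square)
    moreover have "\<epsilon> powi (n + 1) = \<epsilon> * \<epsilon> powi n"
      using assms by (simp add: power_int_add)
    ultimately show ?thesis
      using assms unfolding c_def f_def exp_add by (simp add: field_simps)
  qed
  then have "theta_char a \<epsilon> (v + t) t = (\<Sum>\<^sub>\<infinity>n. c * f v (n + 1))"
    unfolding theta_char_def f_def by simp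
  also have "\<dots> = c * (\<Sum>\<^sub>\<infinity>n. f v (n + 1))"
    by (rule infsum_cmult_right')
  also have "(\<Sum>\<^sub>\<infinity>n. f v (n + 1)) = (\<Sum>\<^sub>\<infinity>n. f v n)"
    by (rule infsum_reindex_bij_betw, rule bij_betwI[where g = "\<lambda>n. n - 1"]) auto
  finally show ?thesis
    unfolding theta_char_def f_def c_def .
qed

definition theta_quasi_periodic :: "(complex \<Rightarrow> complex \<Rightarrow> complex) \<Rightarrow> bool" where
  "theta_quasi_periodic \<theta> \<longleftrightarrow> (\<forall>v t. cmod (\<theta> (v + 1) t) = cmod (\<theta> v t) \<and>
      cmod (\<theta> (v + t) t) = exp (pi * Im t + 2 * pi * Im v) * cmod (\<theta> v t))"

lemma theta_quasi_periodic_theta_char: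
  assumes "cmod \<epsilon> = 1"
  shows "theta_quasi_periodic (theta_char a \<epsilon>)"
proof -
  have "\<epsilon> \<noteq> 0"
    using assms by auto
  then show ?thesis
    unfolding theta_quasi_periodic_def
    using assms by (simp add: theta_char_plus_1 theta_char_plus_tau norm_mult norm_divide norm_exp_eq_Re)
qed

lemma theta_quasi_periodic_scaled:
  "theta_quasi_periodic \<theta> \<Longrightarrow> cmod c = 1 \<Longrightarrow> theta_quasi_periodic (\<lambda>v t. c * \<theta> v t)"
  unfolding theta_quasi_periodic_def by (simp add: norm_mult)

lemma theta_quasi_periodic_theta0: "theta_quasi_periodic theta0"
  using theta_quasi_periodic_theta_char[of "-1" 0]
  by (simp add: theta0_eq_theta_char[abs_def])

lemma theta_quasi_periodic_theta1: "theta_quasi_periodic theta1"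
  using theta_quasi_periodic_scaled[OF theta_quasi_periodic_theta_char[of "-1" "-1/2"], of \<i>]
  by (simp add: theta1_eq_theta_char[abs_def])

lemma theta_quasi_periodic_theta_s: "theta_quasi_periodic (theta_s N)"
  using theta_quasi_periodic_theta0 theta_quasi_periodic_theta_char[of 1 0]
  by (simp add: theta_s_def theta3_eq_theta_char[abs_def])

definition theta_weight :: "(complex \<Rightarrow> complex \<Rightarrow> complex) \<Rightarrow> complex \<Rightarrow> complex \<Rightarrow> real" where
  "theta_weight \<theta> t u = exp (- 2 * pi / Im t * (Im u)^2) * (cmod (\<theta> u t))^2"

lemma theta_weight_plus_1:
  "theta_quasi_periodic \<theta> \<Longrightarrow> theta_weight \<theta> t (u + 1) = theta_weight \<theta> t u"
  unfolding theta_quasi_periodic_def theta_weight_def by simp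

lemma theta_weight_plus_tau:
  assumes "theta_quasi_periodic \<theta>" and "Im t \<noteq> 0"
  shows "theta_weight \<theta> t (u + t) = theta_weight \<theta> t u"
proof -
  have "- 2 * pi / Im t * (Im u + Im t)^2 + 2 * (pi * Im t + 2 * pi * Im u) = - 2 * pi / Im t * (Im u)^2"
    using assms(2) by (simp add: field_simps power2_eq_square)
  then have "exp (- 2 * pi / Im t * (Im u + Im t)^2) * (exp (pi * Im t + 2 * pi * Im u))^2
      = exp (- 2 * pi / Im t * (Im u)^2)"
    by (metis exp_add exp_times_arg_commute power2_eq_square mult_2)
  then show ?thesis
    using assms(1) unfolding theta_quasi_periodic_def theta_weight_def
    by (simp add: power_mult_distrib)
qed

definition period_lattice :: "complex \<Rightarrow> complex set" where
  "period_lattice t = {of_int a + of_int b * t | a b. True}"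

lemma period_latticeI: "u = of_int a + of_int b * t \<Longrightarrow> u \<in> period_lattice t"
  unfolding period_lattice_def by blast

lemma period_latticeE:
  assumes "u \<in> period_lattice t"
  obtains a b where "u = of_int a + of_int b * t"
  using assms unfolding period_lattice_def by blast

lemma theta_weight_lattice_shift:
  assumes "theta_quasi_periodic \<theta>" and "Im t \<noteq> 0" and "d \<in> period_lattice t"
  shows "theta_weight \<theta> t (u + d) = theta_weight \<theta> t u"
proof -
  interpret period_1: periodic_fun_simple "theta_weight \<theta> t" 1
    by unfold_locales (rule theta_weight_plus_1[OF assms(1)])
  interpret period_tau: periodic_fun_simple "theta_weight \<theta> t" t
    by unfold_locales (rule theta_weight_plus_tau[OF assms(1,2)])
  obtain a b where "u + d = (u + of_int b * t) + of_int a * 1"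
    using assms(3) by (rule period_latticeE) (simp add: algebra_simps)
  then show ?thesis
    by (simp only: period_1.plus_of_int period_tau.plus_of_int)
qed

lemma period_lattice_generators: "1 \<in> period_lattice t" "t \<in> period_lattice t"
  by (rule period_latticeI[of _ 1 0], simp) (rule period_latticeI[of _ 0 1], simp)

lemma period_lattice_mult_of_int:
  assumes "d \<in> period_lattice t"
  shows "of_int c * d \<in> period_lattice t"
proof -
  obtain a b where "d = of_int a + of_int b * t"
    using assms by (rule period_latticeE)
  then show ?thesis
    by (intro period_latticeI[of _ "c * a" "c * b"]) (simp add: algebra_simps)
qed

lemma period_lattice_double:
  assumes "d \<in> period_lattice t"
  shows "2 * d \<in> period_lattice (2 * t)"
proof -
  obtain a b where "d = of_int a + of_int b * t"
    using assms by (rule period_latticeE)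
  then show ?thesis
    by (intro period_latticeI[of _ "2 * a" b]) (simp add: algebra_simps)
qed

lemma period_lattice_half:
  assumes "d \<in> period_lattice t"
  shows "d \<in> period_lattice (t / 2)"
proof -
  obtain a b where "d = of_int a + of_int b * t"
    using assms by (rule period_latticeE)
  then show ?thesis
    by (intro period_latticeI[of _ a "2 * b"]) simp
qed

definition coord_factor :: "rtype \<Rightarrow> complex \<Rightarrow> complex \<Rightarrow> complex" where
  "coord_factor R t x = (case R of TB \<Rightarrow> theta1 x t | TBv \<Rightarrow> theta1 (2 * x) (2 * t)
     | TC \<Rightarrow> theta1 (2 * x) t | TCv \<Rightarrow> theta1 x (t / 2)
     | TBC \<Rightarrow> theta1 x t * theta0 (2 * x) (2 * t) | _ \<Rightarrow> 1)"

definition coord_weight :: "rtype \<Rightarrow> complex \<Rightarrow> complex \<Rightarrow> real" where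
  "coord_weight R t x = (case R of TB \<Rightarrow> theta_weight theta1 t x
     | TBv \<Rightarrow> theta_weight theta1 (2 * t) (2 * x)
     | TC \<Rightarrow> theta_weight theta1 t (2 * x) | TCv \<Rightarrow> theta_weight theta1 (t / 2) x
     | TBC \<Rightarrow> theta_weight theta1 t x * theta_weight theta0 (2 * t) (2 * x) | _ \<Rightarrow> 1)"

definition coord_index :: "rtype \<Rightarrow> real" where
  "coord_index R = (case R of TB \<Rightarrow> 1 | TBv \<Rightarrow> 2 | TC \<Rightarrow> 4 | TCv \<Rightarrow> 2 | TBC \<Rightarrow> 3 | _ \<Rightarrow> 0)"

lemma macW_eq_coord_factor_Pfac:
  "R \<noteq> TA \<Longrightarrow> macW R N v t = (\<Prod>l\<in>{1..N}. coord_factor R t (v l)) * Pfac N v t"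
  by (cases R) (simp_all add: macW_def coord_factor_def)

lemma calN_eq_coord_index: "R \<noteq> TA \<Longrightarrow> 1 \<le> N \<Longrightarrow> real (calN R N) = coord_index R + 2 * (real N - 1)"
  by (cases R) (auto simp: coord_index_def calN_def of_nat_diff)

lemma coord_weight_lattice_shift:
  assumes "Im t \<noteq> 0" and "d \<in> period_lattice t"
  shows "coord_weight R t (x + d) = coord_weight R t x"
proof -
  have "Im (2 * t) \<noteq> 0" "Im (t / 2) \<noteq> 0"
    using assms(1) by auto
  moreover have "2 * d \<in> period_lattice (2 * t)" "2 * d \<in> period_lattice t" "d \<in> period_lattice (t / 2)"
    using period_lattice_double period_lattice_mult_of_int[of d t 2] period_lattice_half assms(2)
    by simp_all
  ultimately show ?thesis
    using assms theta_quasi_periodic_theta0 theta_quasi_periodic_theta1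
    unfolding coord_weight_def by (cases R) (simp_all add: theta_weight_lattice_shift distrib_left)
qed

definition weight_product :: "rtype \<Rightarrow> nat \<Rightarrow> complex \<Rightarrow> (nat \<Rightarrow> complex) \<Rightarrow> real" where
  "weight_product R N t v = (if R = TA
     then theta_weight (theta_s N) t (\<Sum>k\<in>{1..N}. v k) *
       (\<Prod>j\<in>{1..N}. \<Prod>k\<in>{j<..N}. theta_weight theta1 t (v k - v j))
     else (\<Prod>l\<in>{1..N}. coord_weight R t (v l)) *
       (\<Prod>j\<in>{1..N}. \<Prod>k\<in>{j<..N}. theta_weight theta1 t (v k - v j) * theta_weight theta1 t (v k + v j)))"

lemma weight_product_lattice_shift:
  assumes "Im t \<noteq> 0" and "d \<in> period_lattice t" and "m \<in> {1..N}"
  shows "weight_product R N t (v(m := v m + d)) = weight_product R N t v"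
proof -
  define u where "u = v(m := v m + d)"
  define c :: "nat \<Rightarrow> int" where "c j = (if j = m then 1 else 0)" for j
  have u: "u j = v j + of_int (c j) * d" for j
    by (simp add: u_def c_def)
  have "u k - u j = (v k - v j) + of_int (c k - c j) * d"
      "u k + u j = (v k + v j) + of_int (c k + c j) * d" for j k
    unfolding u by (simp_all add: algebra_simps)
  then have theta1_pair: "theta_weight theta1 t (u k - u j) = theta_weight theta1 t (v k - v j)"
      "theta_weight theta1 t (u k + u j) = theta_weight theta1 t (v k + v j)" for j k
    by (simp_all only: theta_weight_lattice_shift[OF theta_quasi_periodic_theta1 assms(1)]
        period_lattice_mult_of_int[OF assms(2)])
  have "of_int (c k) * d = (if k = m then d else 0)" for k
    by (simp add: c_def)
  then have "(\<Sum>k\<in>{1..N}. u k) = (\<Sum>k\<in>{1..N}. v k) + d"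
    using assms(3) by (simp add: u sum.distrib)
  then have theta_s_sum:
      "theta_weight (theta_s N) t (\<Sum>k\<in>{1..N}. u k) = theta_weight (theta_s N) t (\<Sum>k\<in>{1..N}. v k)"
    using assms(2) by (simp add: theta_weight_lattice_shift[OF theta_quasi_periodic_theta_s assms(1)])
  have "coord_weight R t (u l) = coord_weight R t (v l)" for l
    using coord_weight_lattice_shift[OF assms(1,2)] by (simp add: u_def)
  then show ?thesis
    unfolding u_def[symmetric] weight_product_def theta1_pair theta_s_sum by simp
qed

lemma coord_weight_eq:
  assumes "Im t \<noteq> 0"
  shows "coord_weight R t x = exp (- 2 * pi / Im t * (coord_index R * (Im x)^2)) * (cmod (coord_factor R t x))^2"
proof -
  have "- 2 * pi / Im (2 * t) * (Im (2 * x))^2 = - 2 * pi / Im t * (2 * (Im x)^2)"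
      "- 2 * pi / Im t * (Im (2 * x))^2 = - 2 * pi / Im t * (4 * (Im x)^2)"
      "- 2 * pi / Im (t / 2) * (Im x)^2 = - 2 * pi / Im t * (2 * (Im x)^2)"
      "- 2 * pi / Im t * (Im x)^2 + - 2 * pi / Im (2 * t) * (Im (2 * x))^2 = - 2 * pi / Im t * (3 * (Im x)^2)"
    using assms by (simp_all add: field_simps power2_eq_square)
  then show ?thesis
    unfolding coord_weight_def coord_factor_def coord_index_def theta_weight_def
    by (cases R) (simp_all add: norm_mult power_mult_distrib mult_ac flip: exp_add)
qed

lemma prod_coord_weight_eq:
  assumes "Im t \<noteq> 0"
  shows "(\<Prod>l\<in>{1..N}. coord_weight R t (v l)) =
    exp (- 2 * pi / Im t * (coord_index R * (\<Sum>l\<in>{1..N}. (Im (v l))^2))) *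
    (cmod (\<Prod>l\<in>{1..N}. coord_factor R t (v l)))^2"
  by (simp add: coord_weight_eq[OF assms] prod_exp_mult power2_norm_prod sum_distrib_left)

lemma prod_pairs_theta_weight_diff:
  "(\<Prod>j\<in>{1..N}. \<Prod>k\<in>{j<..N}. theta_weight theta1 t (v k - v j)) =
    exp (- 2 * pi / Im t * (\<Sum>j\<in>{1..N}. \<Sum>k\<in>{j<..N}. (Im (v k) - Im (v j))^2)) *
    (cmod (macW TA N v t))^2"
  by (simp add: theta_weight_def macW_def prod_exp_mult power2_norm_prod sum_distrib_left)

lemma prod_pairs_theta_weight_diff_sum:
  "(\<Prod>j\<in>{1..N}. \<Prod>k\<in>{j<..N}. theta_weight theta1 t (v k - v j) * theta_weight theta1 t (v k + v j)) =
    exp (- 2 * pi / Im t * (\<Sum>j\<in>{1..N}. \<Sum>k\<in>{j<..N}. (Im (v k) - Im (v j))^2 + (Im (v k) + Im (v j))^2)) *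
    (cmod (Pfac N v t))^2"
proof -
  have "theta_weight theta1 t (v k - v j) * theta_weight theta1 t (v k + v j) =
      exp (- 2 * pi / Im t * ((Im (v k) - Im (v j))^2 + (Im (v k) + Im (v j))^2)) *
      (cmod (theta1 (v k - v j) t * theta1 (v k + v j) t))^2" for j k
    unfolding theta_weight_def distrib_left exp_add norm_mult power_mult_distrib
    by (simp only: minus_complex.sel plus_complex.sel mult_ac)
  then show ?thesis
    by (simp add: Pfac_def prod_exp_mult power2_norm_prod sum_distrib_left)
qed

lemma weight_product_eq:
  assumes "Im t \<noteq> 0" and "1 \<le> N"
  shows "weight_product R N t v =
    exp (- 2 * pi / Im t * (real (calN R N) * (\<Sum>j\<in>{1..N}. (Im (v j))^2))) *
    (if R = TA then (cmod (theta_s N (\<Sum>k\<in>{1..N}. v k) t))^2 * (cmod (macW TA N v t))^2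
     else (cmod (macW R N v t))^2)"
proof -
  define c where "c = - 2 * pi / Im t"
  define S where "S = (\<Sum>j\<in>{1..N}. (Im (v j))^2)"
  show ?thesis
  proof (cases "R = TA")
    case True
    define P where "P = (\<Sum>j\<in>{1..N}. \<Sum>k\<in>{j<..N}. (Im (v k) - Im (v j))^2)"
    have "weight_product R N t v = exp (c * (Im (\<Sum>k\<in>{1..N}. v k))^2) *
        (cmod (theta_s N (\<Sum>k\<in>{1..N}. v k) t))^2 * (exp (c * P) * (cmod (macW TA N v t))^2)"
      unfolding weight_product_def prod_pairs_theta_weight_diff
      using True by (simp add: theta_weight_def c_def P_def)
    also have "\<dots> = exp (c * (P + (Im (\<Sum>k\<in>{1..N}. v k))^2)) *
        ((cmod (theta_s N (\<Sum>k\<in>{1..N}. v k) t))^2 * (cmod (macW TA N v t))^2)"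
      by (simp add: distrib_left exp_add mult_ac)
    also have "P + (Im (\<Sum>k\<in>{1..N}. v k))^2 = real N * S"
      using sum_pairs_sq_diff_add_sq_sum[of "\<lambda>j. Im (v j)" N] by (simp add: P_def S_def Im_sum)
    finally show ?thesis
      by (simp add: True calN_def c_def S_def)
  next
    case False
    have "weight_product R N t v =
        exp (c * (coord_index R * S)) * (cmod (\<Prod>l\<in>{1..N}. coord_factor R t (v l)))^2 *
        (exp (c * (2 * (real N - 1) * S)) * (cmod (Pfac N v t))^2)"
      unfolding weight_product_def prod_coord_weight_eq[OF assms(1)] prod_pairs_theta_weight_diff_sum
        sum_pairs_sq_diff_add_sq_add
      using False by (simp add: c_def S_def)
    also have "\<dots> = exp (c * ((coord_index R + 2 * (real N - 1)) * S)) * (cmod (macW R N v t))^2"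
      by (simp add: macW_eq_coord_factor_Pfac[OF False] norm_mult power_mult_distrib
          distrib_left distrib_right exp_add mult_ac)
    finally show ?thesis
      by (simp add: False calN_eq_coord_index[OF False assms(2)] c_def S_def)
  qed
qed

lemma Qfun_eq_weight_product:
  assumes "0 < L" and "0 < W" and "1 \<le> N"
  shows "Qfun R N L W z = weight_product R N (\<i> * of_real W / of_real L) (\<lambda>j. z j / of_real L)"
proof -
  define t where "t = \<i> * of_real W / of_real L"
  define v where "v j = z j / of_real L" for j
  have "Im t \<noteq> 0"
    using assms(1,2) by (simp add: t_def)
  have exponent: "- 2 * pi * real (calN R N) / (L * W) * (\<Sum>j\<in>{1..N}. (Im (z j))^2)
      = - 2 * pi / Im t * (real (calN R N) * (\<Sum>j\<in>{1..N}. (Im (v j))^2))"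
    using assms(1,2)
    by (simp add: t_def v_def power_divide sum_divide_distrib[symmetric] field_simps power2_eq_square)
  show ?thesis
    unfolding Qfun_def Let_def exponent weight_product_eq[OF \<open>Im t \<noteq> 0\<close> assms(3)]
      t_def[symmetric] v_def[symmetric]
    by simp
qed

theorem proposition2p2:
  fixes L W :: real and N :: nat and R :: rtype and m :: nat and z :: "nat \<Rightarrow> complex"
  assumes "0 < L" and "0 < W" and "1 \<le> N" and "m \<in> {1..N}"
  shows "Qfun R N L W (sigma m (of_real L) z) = Qfun R N L W z
       \<and> Qfun R N L W (sigma m (\<i> * of_real W) z) = Qfun R N L W z"
proof -
  define t where "t = \<i> * of_real W / of_real L"
  define v where "v j = z j / of_real L" for j
  have "Im t \<noteq> 0"
    using assms(1,2) by (simp add: t_def)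
  have "(\<lambda>j. sigma m w z j / of_real L) = v(m := v m + w / of_real L)" for w
    by (auto simp: sigma_def v_def add_divide_distrib)
  moreover have "of_real L / of_real L = (1 :: complex)" "\<i> * of_real W / of_real L = t"
    using assms(1) by (simp_all add: t_def)
  ultimately have "Qfun R N L W (sigma m (of_real L) z) = weight_product R N t (v(m := v m + 1))"
      "Qfun R N L W (sigma m (\<i> * of_real W) z) = weight_product R N t (v(m := v m + t))"
    using Qfun_eq_weight_product[OF assms(1-3)] by (simp_all add: t_def)
  moreover have "Qfun R N L W z = weight_product R N t v"
    using Qfun_eq_weight_product[OF assms(1-3)] by (simp add: t_def v_def[abs_def])
  ultimately show ?thesis
    using weight_product_lattice_shift[OF \<open>Im t \<noteq> 0\<close> _ assms(4)] period_lattice_generators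
    by simp
qed

end
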